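(* Let $\{A_\nu\mid\nu\in\Lambda\}$ be a family of locally $C^{\ast}$-algebras. The Cartesian product $A=\prod_{\nu\in\Lambda}A_\nu$ with the product topology is an annihilator algebra if and only if every $A_\nu$ is an annihilator algebra.
   Context: Locally $C^{\ast}$-algebra: complete Hausdorff locally convex ${}^{\ast}$-algebra over $\mathbb{C}$ with jointly continuous multiplication, topology given by $C^{\ast}$-seminorms. Annihilator algebra: for every closed left ideal $J$ and closed right ideal $K$, $\mathrm{ran}(J)=0\iff J=A$ and $\mathrm{lan}(K)=0\iff K=A$, where $\mathrm{lan},\mathrm{ran}$ are left/right annihilators. *)

theory Defs
  imports Complex_Main "HOL-Library.FuncSet"
begin

text \<open>A (candidate) locally C*-algebra is given by a carrier set inside an ambient type,
  explicit *-algebra operations over the complex numbers, and the family of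
  seminorms defining its topology.\<close>

record 'a lcalg =
  carr :: "'a set"
  zer  :: "'a"
  ad   :: "'a \<Rightarrow> 'a \<Rightarrow> 'a"
  ng   :: "'a \<Rightarrow> 'a"
  sm   :: "complex \<Rightarrow> 'a \<Rightarrow> 'a"
  mul  :: "'a \<Rightarrow> 'a \<Rightarrow> 'a"
  st   :: "'a \<Rightarrow> 'a"
  sn   :: "('a \<Rightarrow> real) set"

definition sub :: "'a lcalg \<Rightarrow> 'a \<Rightarrow> 'a \<Rightarrow> 'a" where
  "sub A x y = ad A x (ng A y)"

definition star_algebra :: "'a lcalg \<Rightarrow> bool" where
  "star_algebra A \<longleftrightarrow>
     zer A \<in> carr A \<and>
     (\<forall>x\<in>carr A. \<forall>y\<in>carr A. ad A x y \<in> carr A \<and> mul A x y \<in> carr A) \<and>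
     (\<forall>x\<in>carr A. ng A x \<in> carr A \<and> st A x \<in> carr A \<and> (\<forall>a. sm A a x \<in> carr A)) \<and>
     (\<forall>x\<in>carr A. \<forall>y\<in>carr A. \<forall>z\<in>carr A. ad A (ad A x y) z = ad A x (ad A y z)) \<and>
     (\<forall>x\<in>carr A. \<forall>y\<in>carr A. ad A x y = ad A y x) \<and>
     (\<forall>x\<in>carr A. ad A x (zer A) = x \<and> ad A x (ng A x) = zer A) \<and>
     (\<forall>a. \<forall>x\<in>carr A. \<forall>y\<in>carr A. sm A a (ad A x y) = ad A (sm A a x) (sm A a y)) \<and>
     (\<forall>a b. \<forall>x\<in>carr A. sm A (a + b) x = ad A (sm A a x) (sm A b x)) \<and>
     (\<forall>a b. \<forall>x\<in>carr A. sm A (a * b) x = sm A a (sm A b x)) \<and>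
     (\<forall>x\<in>carr A. sm A 1 x = x) \<and>
     (\<forall>x\<in>carr A. \<forall>y\<in>carr A. \<forall>z\<in>carr A. mul A (mul A x y) z = mul A x (mul A y z)) \<and>
     (\<forall>x\<in>carr A. \<forall>y\<in>carr A. \<forall>z\<in>carr A.
        mul A x (ad A y z) = ad A (mul A x y) (mul A x z) \<and>
        mul A (ad A x y) z = ad A (mul A x z) (mul A y z)) \<and>
     (\<forall>a. \<forall>x\<in>carr A. \<forall>y\<in>carr A.
        sm A a (mul A x y) = mul A (sm A a x) y \<and> sm A a (mul A x y) = mul A x (sm A a y)) \<and>
     (\<forall>x\<in>carr A. \<forall>y\<in>carr A. st A (ad A x y) = ad A (st A x) (st A y)) \<and>
     (\<forall>a. \<forall>x\<in>carr A. st A (sm A a x) = sm A (cnj a) (st A x)) \<and>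
     (\<forall>x\<in>carr A. \<forall>y\<in>carr A. st A (mul A x y) = mul A (st A y) (st A x)) \<and>
     (\<forall>x\<in>carr A. st A (st A x) = x)"

definition cstar_seminorm :: "'a lcalg \<Rightarrow> ('a \<Rightarrow> real) \<Rightarrow> bool" where
  "cstar_seminorm A p \<longleftrightarrow>
     (\<forall>x\<in>carr A. 0 \<le> p x) \<and>
     (\<forall>x\<in>carr A. \<forall>y\<in>carr A. p (ad A x y) \<le> p x + p y) \<and>
     (\<forall>a. \<forall>x\<in>carr A. p (sm A a x) = norm a * p x) \<and>
     (\<forall>x\<in>carr A. \<forall>y\<in>carr A. p (mul A x y) \<le> p x * p y) \<and>
     (\<forall>x\<in>carr A. p (mul A (st A x) x) = (p x)\<^sup>2)"

definition sn_closed :: "'a lcalg \<Rightarrow> 'a set \<Rightarrow> bool" where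
  "sn_closed A S \<longleftrightarrow> S \<subseteq> carr A \<and>
     (\<forall>x\<in>carr A. (\<forall>F. finite F \<longrightarrow> F \<subseteq> sn A \<longrightarrow> (\<forall>e>0. \<exists>y\<in>S. \<forall>p\<in>F. p (sub A x y) < e))
        \<longrightarrow> x \<in> S)"

definition sn_hausdorff :: "'a lcalg \<Rightarrow> bool" where
  "sn_hausdorff A \<longleftrightarrow> (\<forall>x\<in>carr A. (\<forall>p\<in>sn A. p x = 0) \<longrightarrow> x = zer A)"

text \<open>Completeness: every Cauchy filter on the carrier converges (equivalently, every Cauchy net
  converges).\<close>
definition sn_cauchy :: "'a lcalg \<Rightarrow> 'a filter \<Rightarrow> bool" where
  "sn_cauchy A F \<longleftrightarrow> F \<noteq> bot \<and> eventually (\<lambda>x. x \<in> carr A) F \<and>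
     (\<forall>p\<in>sn A. \<forall>e>0. eventually (\<lambda>(x, y). p (sub A x y) < e) (prod_filter F F))"

definition sn_converges :: "'a lcalg \<Rightarrow> 'a filter \<Rightarrow> 'a \<Rightarrow> bool" where
  "sn_converges A F x \<longleftrightarrow> (\<forall>p\<in>sn A. \<forall>e>0. eventually (\<lambda>y. p (sub A y x) < e) F)"

definition sn_complete :: "'a lcalg \<Rightarrow> bool" where
  "sn_complete A \<longleftrightarrow> (\<forall>F. sn_cauchy A F \<longrightarrow> (\<exists>x\<in>carr A. sn_converges A F x))"

definition locally_cstar_algebra :: "'a lcalg \<Rightarrow> bool" where
  "locally_cstar_algebra A \<longleftrightarrow> star_algebra A \<and> (\<forall>p\<in>sn A. cstar_seminorm A p) \<and>
     sn_hausdorff A \<and> sn_complete A"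

definition subspace_of :: "'a lcalg \<Rightarrow> 'a set \<Rightarrow> bool" where
  "subspace_of A J \<longleftrightarrow> J \<subseteq> carr A \<and> zer A \<in> J \<and>
     (\<forall>x\<in>J. \<forall>y\<in>J. ad A x y \<in> J) \<and> (\<forall>a. \<forall>x\<in>J. sm A a x \<in> J)"

definition left_ideal :: "'a lcalg \<Rightarrow> 'a set \<Rightarrow> bool" where
  "left_ideal A J \<longleftrightarrow> subspace_of A J \<and> (\<forall>a\<in>carr A. \<forall>x\<in>J. mul A a x \<in> J)"

definition right_ideal :: "'a lcalg \<Rightarrow> 'a set \<Rightarrow> bool" where
  "right_ideal A J \<longleftrightarrow> subspace_of A J \<and> (\<forall>a\<in>carr A. \<forall>x\<in>J. mul A x a \<in> J)"

definition lan :: "'a lcalg \<Rightarrow> 'a set \<Rightarrow> 'a set" where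
  "lan A S = {x \<in> carr A. \<forall>s\<in>S. mul A x s = zer A}"

definition ran :: "'a lcalg \<Rightarrow> 'a set \<Rightarrow> 'a set" where
  "ran A S = {x \<in> carr A. \<forall>s\<in>S. mul A s x = zer A}"

definition annihilator_algebra :: "'a lcalg \<Rightarrow> bool" where
  "annihilator_algebra A \<longleftrightarrow>
     (\<forall>J. left_ideal A J \<and> sn_closed A J \<longrightarrow> (ran A J = {zer A} \<longleftrightarrow> J = carr A)) \<and>
     (\<forall>K. right_ideal A K \<and> sn_closed A K \<longrightarrow> (lan A K = {zer A} \<longleftrightarrow> K = carr A))"

definition prod_alg :: "'i set \<Rightarrow> ('i \<Rightarrow> 'a lcalg) \<Rightarrow> ('i \<Rightarrow> 'a) lcalg" where
  "prod_alg I A = \<lparr>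
     carr = (\<Pi>\<^sub>E i\<in>I. carr (A i)),
     zer = (\<lambda>i\<in>I. zer (A i)),
     ad = (\<lambda>f g. \<lambda>i\<in>I. ad (A i) (f i) (g i)),
     ng = (\<lambda>f. \<lambda>i\<in>I. ng (A i) (f i)),
     sm = (\<lambda>a f. \<lambda>i\<in>I. sm (A i) a (f i)),
     mul = (\<lambda>f g. \<lambda>i\<in>I. mul (A i) (f i) (g i)),
     st = (\<lambda>f. \<lambda>i\<in>I. st (A i) (f i)),
     sn = {(\<lambda>f. p (f i)) | i p. i \<in> I \<and> p \<in> sn (A i)} \<rparr>"

end

theory Submission
  imports Defs
begin

text \<open>Only two consequences of the locally C*-structure matter: the involution is proper
  (\<open>x\<^sup>* x = 0\<close> forces \<open>x = 0\<close>, by the C*-identity and the Hausdorff property) and the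
  seminorms vanish at \<open>0\<close>. The annihilator condition splits into a condition on closed left
  ideals of \<open>A\<close> and the same condition for the opposite algebra, and the product of the opposite
  algebras is the opposite of the product, so it suffices to treat closed left ideals.

  If the product satisfies the condition and \<open>J\<^sub>k\<close> is a closed left ideal of \<open>A\<^sub>k\<close> with zero right
  annihilator, its preimage under the \<open>k\<close>-th projection is a closed left ideal of the product with
  zero right annihilator (properness kills the other coordinates), hence the whole product, so
  \<open>J\<^sub>k = A\<^sub>k\<close>. Conversely, if \<open>J\<close> is a closed left ideal of the product with zero right
  annihilator, each slice \<open>{y. prod_embed k y \<in> J}\<close> is a closed left ideal of \<open>A\<^sub>k\<close> with zero
  right annihilator, hence all of \<open>A\<^sub>k\<close>; so \<open>J\<close> contains every finitely supported element,
  and these are dense.\<close>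

context
  fixes B :: "'a lcalg"
  assumes B: "star_algebra B"
begin

lemma zer_closed: "zer B \<in> carr B"
  and ad_closed: "x \<in> carr B \<Longrightarrow> y \<in> carr B \<Longrightarrow> ad B x y \<in> carr B"
  and mul_closed: "x \<in> carr B \<Longrightarrow> y \<in> carr B \<Longrightarrow> mul B x y \<in> carr B"
  and ng_closed: "x \<in> carr B \<Longrightarrow> ng B x \<in> carr B"
  and st_closed: "x \<in> carr B \<Longrightarrow> st B x \<in> carr B"
  and sm_closed: "x \<in> carr B \<Longrightarrow> sm B a x \<in> carr B"
  and ad_assoc: "x \<in> carr B \<Longrightarrow> y \<in> carr B \<Longrightarrow> z \<in> carr B \<Longrightarrow>
    ad B (ad B x y) z = ad B x (ad B y z)"
  and ad_comm: "x \<in> carr B \<Longrightarrow> y \<in> carr B \<Longrightarrow> ad B x y = ad B y x"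
  and ad_zer: "x \<in> carr B \<Longrightarrow> ad B x (zer B) = x"
  and ad_ng: "x \<in> carr B \<Longrightarrow> ad B x (ng B x) = zer B"
  and sm_ad: "x \<in> carr B \<Longrightarrow> y \<in> carr B \<Longrightarrow> sm B a (ad B x y) = ad B (sm B a x) (sm B a y)"
  and sm_add: "x \<in> carr B \<Longrightarrow> sm B (a + b) x = ad B (sm B a x) (sm B b x)"
  and sm_mult: "x \<in> carr B \<Longrightarrow> sm B (a * b) x = sm B a (sm B b x)"
  and sm_one: "x \<in> carr B \<Longrightarrow> sm B 1 x = x"
  and mul_assoc: "x \<in> carr B \<Longrightarrow> y \<in> carr B \<Longrightarrow> z \<in> carr B \<Longrightarrow>
    mul B (mul B x y) z = mul B x (mul B y z)"
  and mul_ad_distrib: "x \<in> carr B \<Longrightarrow> y \<in> carr B \<Longrightarrow> z \<in> carr B \<Longrightarrow>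
    mul B x (ad B y z) = ad B (mul B x y) (mul B x z)"
  and ad_mul_distrib: "x \<in> carr B \<Longrightarrow> y \<in> carr B \<Longrightarrow> z \<in> carr B \<Longrightarrow>
    mul B (ad B x y) z = ad B (mul B x z) (mul B y z)"
  and sm_mul_left: "x \<in> carr B \<Longrightarrow> y \<in> carr B \<Longrightarrow> sm B a (mul B x y) = mul B (sm B a x) y"
  and st_ad: "x \<in> carr B \<Longrightarrow> y \<in> carr B \<Longrightarrow> st B (ad B x y) = ad B (st B x) (st B y)"
  and st_sm: "x \<in> carr B \<Longrightarrow> st B (sm B a x) = sm B (cnj a) (st B x)"
  and st_mul: "x \<in> carr B \<Longrightarrow> y \<in> carr B \<Longrightarrow> st B (mul B x y) = mul B (st B y) (st B x)"
  and st_st: "x \<in> carr B \<Longrightarrow> st B (st B x) = x"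
  using B unfolding star_algebra_def by auto

lemma sm_mul_right: "x \<in> carr B \<Longrightarrow> y \<in> carr B \<Longrightarrow> sm B a (mul B x y) = mul B x (sm B a y)"
  using B unfolding star_algebra_def by blast

lemma sm_zero:
  assumes x: "x \<in> carr B"
  shows "sm B 0 x = zer B"
proof -
  define u where "u = sm B 0 x"
  have u: "u \<in> carr B" using x by (simp add: u_def sm_closed)
  have "u = ad B u u" using sm_add[OF x, of 0 0] by (simp add: u_def)
  then have "ad B u (ng B u) = ad B u (ad B u (ng B u))"
    using ad_assoc[OF u u ng_closed[OF u]] by simp
  then show ?thesis using ad_ng[OF u] ad_zer[OF u] by (simp add: u_def)
qed

lemma mul_zer_left: "x \<in> carr B \<Longrightarrow> mul B (zer B) x = zer B"
  using sm_mul_left[OF zer_closed, of x 0] by (simp add: sm_zero zer_closed mul_closed)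

lemma mul_zer_right: "x \<in> carr B \<Longrightarrow> mul B x (zer B) = zer B"
  using sm_mul_right[OF _ zer_closed, of x 0] by (simp add: sm_zero zer_closed mul_closed)

lemma sm_zer: "sm B a (zer B) = zer B"
  using sm_mult[OF zer_closed, of a 0] by (simp add: sm_zero zer_closed)

lemma st_zer: "st B (zer B) = zer B"
  using st_sm[OF zer_closed, of 0] by (simp add: sm_zero zer_closed st_closed)

lemma ad_zer_left: "x \<in> carr B \<Longrightarrow> ad B (zer B) x = x"
  using ad_comm ad_zer zer_closed by metis

lemma sub_self: "x \<in> carr B \<Longrightarrow> sub B x x = zer B"
  by (simp add: sub_def ad_ng)

end

lemma star_algebra_prod_alg:
  assumes "\<forall>i\<in>I. star_algebra (A i)"
  shows "star_algebra (prod_alg I A)"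
proof -
  have ax: "star_algebra (A i)" if "i \<in> I" for i using assms that by blast
  have [simp]: "x \<in> (\<Pi>\<^sub>E i\<in>I. carr (A i)) \<Longrightarrow> i \<in> I \<Longrightarrow> x i \<in> carr (A i)" for x i
    by (rule PiE_mem)
  have restrict_eq: "(\<lambda>i\<in>I. f i) = x"
    if "x \<in> (\<Pi>\<^sub>E i\<in>I. carr (A i))" "\<And>i. i \<in> I \<Longrightarrow> f i = x i" for f x
    using that by (metis PiE_restrict restrict_ext)
  show ?thesis
    unfolding star_algebra_def
    by (auto simp: prod_alg_def ax zer_closed ad_closed mul_closed ng_closed st_closed sm_closed
        ad_assoc ad_zer ad_ng sm_ad sm_add sm_mult sm_one mul_assoc mul_ad_distrib
        ad_mul_distrib st_ad st_sm st_mul st_st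
        cong: restrict_cong intro!: restrict_ext restrict_eq;
        metis ax PiE_mem ad_comm sm_mul_left sm_mul_right)
qed

definition proper_star_algebra :: "'a lcalg \<Rightarrow> bool" where
  "proper_star_algebra B \<longleftrightarrow>
     star_algebra B \<and> (\<forall>x\<in>carr B. mul B (st B x) x = zer B \<longrightarrow> x = zer B)"

lemma proper_star_algebra_star_algebra: "proper_star_algebra B \<Longrightarrow> star_algebra B"
  by (simp add: proper_star_algebra_def)

lemma proper_star_algebra_st_mul_eq_zer:
  "proper_star_algebra B \<Longrightarrow> x \<in> carr B \<Longrightarrow> mul B (st B x) x = zer B \<Longrightarrow> x = zer B"
  by (simp add: proper_star_algebra_def)

lemma proper_star_algebra_mul_st_eq_zer:
  assumes B: "proper_star_algebra B" and x: "x \<in> carr B" and "mul B x (st B x) = zer B"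
  shows "x = zer B"
proof -
  have SB: "star_algebra B" using B by (rule proper_star_algebra_star_algebra)
  have "mul B (st B (st B x)) (st B x) = zer B" using assms st_st[OF SB x] by simp
  then have "st B x = zer B" using proper_star_algebra_st_mul_eq_zer[OF B st_closed[OF SB x]] by blast
  then show ?thesis using st_st[OF SB x] st_zer[OF SB] by metis
qed

lemma ran_carr:
  assumes B: "proper_star_algebra B"
  shows "ran B (carr B) = {zer B}"
proof -
  have SB: "star_algebra B" using B by (rule proper_star_algebra_star_algebra)
  have "x = zer B" if "x \<in> ran B (carr B)" for x
    using that proper_star_algebra_st_mul_eq_zer[OF B] st_closed[OF SB] by (auto simp: ran_def)
  then show ?thesis using zer_closed[OF SB] mul_zer_right[OF SB] by (auto simp: ran_def)
qed

lemma locally_cstar_algebra_seminorm_zer: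
  assumes B: "locally_cstar_algebra B" and p: "p \<in> sn B"
  shows "p (zer B) = 0"
proof -
  have SB: "star_algebra B" and "cstar_seminorm B p"
    using assms by (auto simp: locally_cstar_algebra_def)
  then have "p (sm B 0 (zer B)) = 0"
    using zer_closed[OF SB] unfolding cstar_seminorm_def by simp
  then show ?thesis using sm_zero[OF SB zer_closed[OF SB]] by simp
qed

lemma locally_cstar_algebra_proper:
  assumes B: "locally_cstar_algebra B"
  shows "proper_star_algebra B"
proof -
  have "x = zer B" if x: "x \<in> carr B" and m: "mul B (st B x) x = zer B" for x
  proof -
    have "p x = 0" if p: "p \<in> sn B" for p
    proof -
      have "(p x)\<^sup>2 = p (mul B (st B x) x)"
        using B p x by (simp add: locally_cstar_algebra_def cstar_seminorm_def)
      then show ?thesis using m locally_cstar_algebra_seminorm_zer[OF B p] by simp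
    qed
    then show ?thesis using B x by (simp add: locally_cstar_algebra_def sn_hausdorff_def)
  qed
  then show ?thesis using B by (simp add: proper_star_algebra_def locally_cstar_algebra_def)
qed

lemma proper_star_algebra_prod_alg:
  assumes A: "\<forall>i\<in>I. proper_star_algebra (A i)"
  shows "proper_star_algebra (prod_alg I A)"
proof -
  have "x = zer (prod_alg I A)"
    if x: "x \<in> carr (prod_alg I A)"
      and m: "mul (prod_alg I A) (st (prod_alg I A) x) x = zer (prod_alg I A)" for x
  proof -
    have "x i = zer (A i)" if i: "i \<in> I" for i
    proof (rule proper_star_algebra_st_mul_eq_zer)
      show "mul (A i) (st (A i) (x i)) (x i) = zer (A i)"
        using fun_cong[OF m, of i] i by (simp add: prod_alg_def)
    qed (use A x i in \<open>auto simp: prod_alg_def\<close>)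
    then show ?thesis using x by (auto simp: prod_alg_def PiE_iff extensional_def)
  qed
  moreover have "star_algebra (prod_alg I A)"
    using A proper_star_algebra_star_algebra star_algebra_prod_alg by metis
  ultimately show ?thesis by (simp add: proper_star_algebra_def)
qed

definition opposite_alg :: "'a lcalg \<Rightarrow> 'a lcalg" where
  "opposite_alg B = B\<lparr>mul := (\<lambda>x y. mul B y x)\<rparr>"

lemma opposite_alg_simps [simp]:
  "carr (opposite_alg B) = carr B" "zer (opposite_alg B) = zer B" "ad (opposite_alg B) = ad B"
  "ng (opposite_alg B) = ng B" "sm (opposite_alg B) = sm B" "st (opposite_alg B) = st B"
  "sn (opposite_alg B) = sn B" "mul (opposite_alg B) x y = mul B y x"
  by (simp_all add: opposite_alg_def)

lemma star_algebra_opposite_alg: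
  assumes B: "star_algebra B"
  shows "star_algebra (opposite_alg B)"
  unfolding star_algebra_def opposite_alg_simps
  by (auto simp: B zer_closed ad_closed mul_closed ng_closed st_closed sm_closed ad_assoc ad_zer
      ad_ng sm_ad sm_add sm_mult sm_one mul_assoc mul_ad_distrib ad_mul_distrib st_ad st_sm st_mul
      st_st; metis B ad_comm sm_mul_left sm_mul_right)

lemma proper_star_algebra_opposite_alg:
  assumes "proper_star_algebra B"
  shows "proper_star_algebra (opposite_alg B)"
  using star_algebra_opposite_alg[OF proper_star_algebra_star_algebra[OF assms]]
    proper_star_algebra_mul_st_eq_zer[OF assms]
  by (simp add: proper_star_algebra_def)

lemma prod_alg_opposite_alg: "prod_alg I (\<lambda>i. opposite_alg (A i)) = opposite_alg (prod_alg I A)"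
  by (simp add: prod_alg_def opposite_alg_def)

definition left_annihilator_algebra :: "'a lcalg \<Rightarrow> bool" where
  "left_annihilator_algebra B \<longleftrightarrow>
     (\<forall>J. left_ideal B J \<and> sn_closed B J \<longrightarrow> (ran B J = {zer B} \<longleftrightarrow> J = carr B))"

lemma annihilator_algebra_iff_left:
  "annihilator_algebra B \<longleftrightarrow>
     left_annihilator_algebra B \<and> left_annihilator_algebra (opposite_alg B)"
proof -
  have "right_ideal B K = left_ideal (opposite_alg B) K" for K
    by (simp add: right_ideal_def left_ideal_def subspace_of_def)
  moreover have "lan B K = ran (opposite_alg B) K" for K
    by (simp add: lan_def ran_def)
  moreover have "sn_closed (opposite_alg B) K = sn_closed B K" for K
    by (simp add: sn_closed_def sub_def)
  ultimately show ?thesis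
    unfolding annihilator_algebra_def left_annihilator_algebra_def by simp
qed

lemma left_annihilator_algebra_iff:
  assumes "proper_star_algebra B"
  shows "left_annihilator_algebra B \<longleftrightarrow>
    (\<forall>J. left_ideal B J \<longrightarrow> sn_closed B J \<longrightarrow> ran B J = {zer B} \<longrightarrow> J = carr B)"
  using ran_carr[OF assms] unfolding left_annihilator_algebra_def by blast

lemma carr_prod_alg [simp]: "carr (prod_alg I A) = (\<Pi>\<^sub>E i\<in>I. carr (A i))"
  by (simp add: prod_alg_def)

lemma prod_alg_simps:
  "zer (prod_alg I A) = (\<lambda>i\<in>I. zer (A i))"
  "ad (prod_alg I A) f g = (\<lambda>i\<in>I. ad (A i) (f i) (g i))"
  "sm (prod_alg I A) a f = (\<lambda>i\<in>I. sm (A i) a (f i))"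
  "mul (prod_alg I A) f g = (\<lambda>i\<in>I. mul (A i) (f i) (g i))"
  "st (prod_alg I A) f = (\<lambda>i\<in>I. st (A i) (f i))"
  "sn (prod_alg I A) = {(\<lambda>f. p (f i)) | i p. i \<in> I \<and> p \<in> sn (A i)}"
  by (simp_all add: prod_alg_def)

lemma sub_prod_alg: "i \<in> I \<Longrightarrow> sub (prod_alg I A) f g i = sub (A i) (f i) (g i)"
  by (simp add: sub_def prod_alg_def)

lemma finite_seminorms_prod_alg_support:
  assumes "finite F" "F \<subseteq> sn (prod_alg I A)"
  obtains S where "finite S" "S \<subseteq> I" "\<forall>q\<in>F. \<exists>i\<in>S. \<exists>p\<in>sn (A i). q = (\<lambda>f. p (f i))"
proof -
  have "\<forall>q\<in>F. \<exists>i. i \<in> I \<and> (\<exists>p\<in>sn (A i). q = (\<lambda>f. p (f i)))"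
    using assms(2) by (fastforce simp: prod_alg_simps)
  then obtain idx where idx: "\<forall>q\<in>F. idx q \<in> I \<and> (\<exists>p\<in>sn (A (idx q)). q = (\<lambda>f. p (f (idx q))))"
    by metis
  show ?thesis
  proof (rule that[of "idx ` F"])
    show "finite (idx ` F)" using assms(1) by blast
    show "idx ` F \<subseteq> I" "\<forall>q\<in>F. \<exists>i\<in>idx ` F. \<exists>p\<in>sn (A i). q = (\<lambda>f. p (f i))"
      using idx by blast+
  qed
qed

lemma finite_coordinate_seminorms:
  assumes "finite F"
  shows "finite {p :: 'a \<Rightarrow> real. (\<lambda>f :: 'i \<Rightarrow> 'a. p (f k)) \<in> F}"
proof -
  have "inj (\<lambda>(p :: 'a \<Rightarrow> real) (f :: 'i \<Rightarrow> 'a). p (f k))"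
  proof (rule injI)
    fix p p' :: "'a \<Rightarrow> real" assume eq: "(\<lambda>f :: 'i \<Rightarrow> 'a. p (f k)) = (\<lambda>f. p' (f k))"
    show "p = p'"
    proof (rule ext)
      fix a show "p a = p' a" using fun_cong[OF eq, of "\<lambda>_. a"] by simp
    qed
  qed
  then show ?thesis using finite_vimageI[OF assms] by (simp add: vimage_def)
qed

definition prod_embed :: "'i set \<Rightarrow> ('i \<Rightarrow> 'a lcalg) \<Rightarrow> 'i \<Rightarrow> 'a \<Rightarrow> 'i \<Rightarrow> 'a" where
  "prod_embed I A k y = (\<lambda>i\<in>I. if i = k then y else zer (A i))"

definition prod_truncate :: "'i set \<Rightarrow> ('i \<Rightarrow> 'a lcalg) \<Rightarrow> 'i set \<Rightarrow> ('i \<Rightarrow> 'a) \<Rightarrow> 'i \<Rightarrow> 'a" where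
  "prod_truncate I A S x = (\<lambda>i\<in>I. if i \<in> S then x i else zer (A i))"

lemma prod_embed_apply_self [simp]: "k \<in> I \<Longrightarrow> prod_embed I A k y k = y"
  by (simp add: prod_embed_def)

lemma prod_embed_eq_zer_iff:
  "k \<in> I \<Longrightarrow> prod_embed I A k y = zer (prod_alg I A) \<longleftrightarrow> y = zer (A k)"
  by (auto simp: prod_alg_simps prod_embed_def fun_eq_iff)

lemma prod_embed_zer: "prod_embed I A k (zer (A k)) = zer (prod_alg I A)"
  by (auto simp: prod_alg_simps prod_embed_def)

context
  fixes I :: "'i set" and A :: "'i \<Rightarrow> 'a lcalg"
  assumes A: "\<forall>i\<in>I. star_algebra (A i)"
begin

lemma star_algebra_component [simp]: "i \<in> I \<Longrightarrow> star_algebra (A i)"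
  using A by blast

lemma prod_embed_closed:
  "k \<in> I \<Longrightarrow> y \<in> carr (A k) \<Longrightarrow> prod_embed I A k y \<in> carr (prod_alg I A)"
  by (auto simp: prod_embed_def zer_closed)

lemma prod_embed_ad:
  "k \<in> I \<Longrightarrow> x \<in> carr (A k) \<Longrightarrow> y \<in> carr (A k) \<Longrightarrow>
    prod_embed I A k (ad (A k) x y) = ad (prod_alg I A) (prod_embed I A k x) (prod_embed I A k y)"
  by (auto simp: prod_alg_simps prod_embed_def ad_zer zer_closed cong: restrict_cong)

lemma prod_embed_sm:
  "k \<in> I \<Longrightarrow> prod_embed I A k (sm (A k) a x) = sm (prod_alg I A) a (prod_embed I A k x)"
  by (auto simp: prod_alg_simps prod_embed_def sm_zer cong: restrict_cong)

lemma mul_prod_embed_left: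
  "s \<in> carr (prod_alg I A) \<Longrightarrow> k \<in> I \<Longrightarrow> y \<in> carr (A k) \<Longrightarrow>
    mul (prod_alg I A) (prod_embed I A k y) s = prod_embed I A k (mul (A k) y (s k))"
  by (auto simp: prod_alg_simps prod_embed_def mul_zer_left PiE_iff cong: restrict_cong)

lemma mul_prod_embed_right:
  "s \<in> carr (prod_alg I A) \<Longrightarrow> k \<in> I \<Longrightarrow> y \<in> carr (A k) \<Longrightarrow>
    mul (prod_alg I A) s (prod_embed I A k y) = prod_embed I A k (mul (A k) (s k) y)"
  by (auto simp: prod_alg_simps prod_embed_def mul_zer_right PiE_iff cong: restrict_cong)

lemma prod_truncate_insert:
  assumes x: "x \<in> carr (prod_alg I A)" and k: "k \<in> I" "k \<notin> S"
  shows "prod_truncate I A (insert k S) x =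
    ad (prod_alg I A) (prod_truncate I A S x) (prod_embed I A k (x k))"
  using x k
  by (auto simp: prod_alg_simps prod_truncate_def prod_embed_def PiE_iff ad_zer ad_zer_left
      zer_closed intro!: restrict_ext)

lemma prod_truncate_in_subspace:
  assumes J: "subspace_of (prod_alg I A) J"
    and embed: "\<And>k y. k \<in> I \<Longrightarrow> y \<in> carr (A k) \<Longrightarrow> prod_embed I A k y \<in> J"
    and x: "x \<in> carr (prod_alg I A)" and S: "finite S"
  shows "prod_truncate I A S x \<in> J"
  using S
proof (induction S rule: finite_induct)
  case empty
  have "prod_truncate I A {} x = zer (prod_alg I A)"
    by (simp add: prod_alg_simps prod_truncate_def)
  then show ?case using J unfolding subspace_of_def by metis
next
  case (insert k S)
  show ?case
  proof (cases "k \<in> I")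
    case True
    have "x k \<in> carr (A k)" using x True by auto
    then show ?thesis
      using prod_truncate_insert[OF x True insert(2)] insert(3) embed[OF True] J
      unfolding subspace_of_def by metis
  next
    case False
    then have "prod_truncate I A (insert k S) x = prod_truncate I A S x"
      by (auto simp: prod_truncate_def)
    then show ?thesis using insert(3) by simp
  qed
qed

text \<open>A closed subspace containing every \<open>prod_embed k y\<close> is everything, because the finite
  truncations of \<open>x\<close> converge to \<open>x\<close> in the product topology.\<close>
lemma subspace_containing_embeds_eq_carr:
  assumes zero: "\<forall>i\<in>I. \<forall>p\<in>sn (A i). p (zer (A i)) = 0"
    and J: "subspace_of (prod_alg I A) J" "sn_closed (prod_alg I A) J"
    and embed: "\<And>k y. k \<in> I \<Longrightarrow> y \<in> carr (A k) \<Longrightarrow> prod_embed I A k y \<in> J"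
  shows "J = carr (prod_alg I A)"
proof
  show "J \<subseteq> carr (prod_alg I A)" using J by (simp add: subspace_of_def)
  show "carr (prod_alg I A) \<subseteq> J"
  proof
    fix x assume x: "x \<in> carr (prod_alg I A)"
    have "\<exists>y\<in>J. \<forall>q\<in>F. q (sub (prod_alg I A) x y) < e"
      if F: "finite F" "F \<subseteq> sn (prod_alg I A)" and e: "e > 0" for F e
    proof -
      obtain S where S: "finite S" "S \<subseteq> I" "\<forall>q\<in>F. \<exists>i\<in>S. \<exists>p\<in>sn (A i). q = (\<lambda>f. p (f i))"
        using finite_seminorms_prod_alg_support[OF F] by blast
      have "q (sub (prod_alg I A) x (prod_truncate I A S x)) < e" if "q \<in> F" for q
      proof -
        obtain i p where i: "i \<in> S" and p: "p \<in> sn (A i)" and q: "q = (\<lambda>f. p (f i))"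
          using S(3) \<open>q \<in> F\<close> by blast
        have "i \<in> I" using i S(2) by blast
        then have "p (zer (A i)) = 0" using zero p by blast
        then show ?thesis
          using q i \<open>i \<in> I\<close> x e by (simp add: sub_prod_alg prod_truncate_def PiE_iff sub_self)
      qed
      then show ?thesis
        using prod_truncate_in_subspace[OF J(1) embed x S(1)] by blast
    qed
    then show "x \<in> J" using J(2) x by (simp add: sn_closed_def)
  qed
qed

lemma left_ideal_prod_embed_slice:
  assumes J: "left_ideal (prod_alg I A) J" and k: "k \<in> I"
  shows "left_ideal (A k) {y \<in> carr (A k). prod_embed I A k y \<in> J}"
proof -
  have Ak: "star_algebra (A k)" using k by simp
  have "mul (A k) a y \<in> carr (A k) \<and> prod_embed I A k (mul (A k) a y) \<in> J"
    if a: "a \<in> carr (A k)" and y: "y \<in> carr (A k)" "prod_embed I A k y \<in> J" for a y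
  proof -
    have "mul (prod_alg I A) (prod_embed I A k a) (prod_embed I A k y) \<in> J"
      using J prod_embed_closed[OF k a] y(2) by (simp add: left_ideal_def)
    then show ?thesis
      using mul_prod_embed_left[OF prod_embed_closed[OF k y(1)] k a] k mul_closed[OF Ak a y(1)]
      by simp
  qed
  then show ?thesis
    using J zer_closed[OF Ak] ad_closed[OF Ak] sm_closed[OF Ak]
    by (auto simp: left_ideal_def subspace_of_def prod_embed_zer prod_embed_ad[OF k]
        prod_embed_sm[OF k])
qed

lemma sn_closed_prod_embed_slice:
  assumes zero: "\<forall>i\<in>I. \<forall>p\<in>sn (A i). p (zer (A i)) = 0"
    and J: "sn_closed (prod_alg I A) J" and k: "k \<in> I"
  shows "sn_closed (A k) {y \<in> carr (A k). prod_embed I A k y \<in> J}"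
proof -
  have "prod_embed I A k z \<in> J" if z: "z \<in> carr (A k)"
    and approx: "\<forall>G. finite G \<longrightarrow> G \<subseteq> sn (A k) \<longrightarrow>
      (\<forall>e>0. \<exists>y\<in>{y \<in> carr (A k). prod_embed I A k y \<in> J}. \<forall>p\<in>G. p (sub (A k) z y) < e)"
    for z
  proof -
    have "\<exists>y\<in>J. \<forall>q\<in>F. q (sub (prod_alg I A) (prod_embed I A k z) y) < e"
      if F: "finite F" "F \<subseteq> sn (prod_alg I A)" and e: "e > 0" for F e
    proof -
      define G where "G = {p \<in> sn (A k). (\<lambda>f. p (f k)) \<in> F}"
      have "finite G"
        using finite_coordinate_seminorms[OF F(1), of k]
        by (rule finite_subset[rotated]) (auto simp: G_def)
      moreover have "G \<subseteq> sn (A k)" by (auto simp: G_def)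
      ultimately obtain y where y: "y \<in> carr (A k)" "prod_embed I A k y \<in> J"
        and close: "\<forall>p\<in>G. p (sub (A k) z y) < e"
        using approx e by blast
      have "q (sub (prod_alg I A) (prod_embed I A k z) (prod_embed I A k y)) < e" if "q \<in> F" for q
      proof -
        obtain i p where i: "i \<in> I" and p: "p \<in> sn (A i)" and q: "q = (\<lambda>f. p (f i))"
          using F(2) \<open>q \<in> F\<close> by (auto simp: prod_alg_simps)
        show ?thesis
        proof (cases "i = k")
          case True
          then show ?thesis using close p q \<open>q \<in> F\<close> k by (simp add: G_def sub_prod_alg)
        next
          case False
          have "p (zer (A i)) = 0" using zero i p by blast
          then show ?thesis
            using False q i e by (simp add: sub_prod_alg prod_embed_def sub_self zer_closed
                star_algebra_component)
        qed
      qed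
      then show ?thesis using y by blast
    qed
    then show ?thesis
      using J prod_embed_closed[OF k z] by (simp add: sn_closed_def)
  qed
  then show ?thesis unfolding sn_closed_def by blast
qed

text \<open>If \<open>z\<close> right-annihilates the slice and \<open>j \<in> J\<close>, then \<open>j\<^sub>k z\<close> is annihilated from the left
  by all of \<open>A\<^sub>k\<close>, since \<open>a j\<^sub>k\<close> lies in the slice; so \<open>j\<^sub>k z = 0\<close> by properness, and
  \<open>prod_embed k z\<close> right-annihilates \<open>J\<close>.\<close>
lemma ran_prod_embed_slice:
  assumes proper: "\<forall>i\<in>I. proper_star_algebra (A i)"
    and J: "left_ideal (prod_alg I A) J" "ran (prod_alg I A) J = {zer (prod_alg I A)}"
    and k: "k \<in> I"
  shows "ran (A k) {y \<in> carr (A k). prod_embed I A k y \<in> J} = {zer (A k)}"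
proof -
  let ?Jk = "{y \<in> carr (A k). prod_embed I A k y \<in> J}"
  have Ak: "star_algebra (A k)" using k by simp
  have "z = zer (A k)" if z: "z \<in> ran (A k) ?Jk" for z
  proof -
    have zc: "z \<in> carr (A k)" and annih: "\<And>s. s \<in> ?Jk \<Longrightarrow> mul (A k) s z = zer (A k)"
      using z by (auto simp: ran_def)
    have jz: "mul (A k) (j k) z = zer (A k)" if j: "j \<in> J" for j
    proof -
      have jc: "j \<in> carr (prod_alg I A)" using J(1) j by (auto simp: left_ideal_def subspace_of_def)
      then have jk: "j k \<in> carr (A k)" using k by auto
      have "mul (A k) a (mul (A k) (j k) z) = zer (A k)" if a: "a \<in> carr (A k)" for a
      proof -
        have "mul (prod_alg I A) (prod_embed I A k a) j \<in> J"
          using J(1) prod_embed_closed[OF k a] j by (simp add: left_ideal_def)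
        then have "mul (A k) a (j k) \<in> ?Jk"
          using mul_prod_embed_left[OF jc k a] mul_closed[OF Ak a jk] by simp
        then show ?thesis using annih mul_assoc[OF Ak a jk zc] by simp
      qed
      then have "mul (A k) (j k) z \<in> ran (A k) (carr (A k))"
        using mul_closed[OF Ak jk zc] by (simp add: ran_def)
      then show ?thesis using ran_carr[OF proper[rule_format, OF k]] by blast
    qed
    have "mul (prod_alg I A) j (prod_embed I A k z) = zer (prod_alg I A)" if j: "j \<in> J" for j
    proof -
      have "j \<in> carr (prod_alg I A)" using J(1) j by (auto simp: left_ideal_def subspace_of_def)
      then show ?thesis using mul_prod_embed_right[OF _ k zc] jz[OF j] prod_embed_zer by simp
    qed
    then have "prod_embed I A k z \<in> ran (prod_alg I A) J"
      using prod_embed_closed[OF k zc] by (simp add: ran_def)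
    then have "prod_embed I A k z = zer (prod_alg I A)" using J(2) by blast
    then show ?thesis by (rule prod_embed_eq_zer_iff[OF k, THEN iffD1])
  qed
  then show ?thesis
    using zer_closed[OF Ak] mul_zer_right[OF Ak] by (auto simp: ran_def)
qed

lemma left_ideal_proj_vimage:
  assumes Jk: "left_ideal (A k) Jk" and k: "k \<in> I"
  shows "left_ideal (prod_alg I A) {x \<in> carr (prod_alg I A). x k \<in> Jk}"
proof -
  have P: "star_algebra (prod_alg I A)" by (rule star_algebra_prod_alg[OF A])
  have "zer (prod_alg I A) k = zer (A k)"
    "\<And>x y. ad (prod_alg I A) x y k = ad (A k) (x k) (y k)"
    "\<And>a x. sm (prod_alg I A) a x k = sm (A k) a (x k)"
    "\<And>x y. mul (prod_alg I A) x y k = mul (A k) (x k) (y k)"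
    "\<And>x. x \<in> carr (prod_alg I A) \<Longrightarrow> x k \<in> carr (A k)"
    using k by (auto simp: prod_alg_simps)
  then show ?thesis
    using Jk k zer_closed[OF P] ad_closed[OF P] sm_closed[OF P] mul_closed[OF P]
    by (auto simp: left_ideal_def subspace_of_def simp del: carr_prod_alg)
qed

lemma sn_closed_proj_vimage:
  assumes Jk: "sn_closed (A k) Jk" and k: "k \<in> I"
  shows "sn_closed (prod_alg I A) {x \<in> carr (prod_alg I A). x k \<in> Jk}"
  unfolding sn_closed_def
proof (intro conjI ballI impI)
  fix x assume x: "x \<in> carr (prod_alg I A)"
    and approx: "\<forall>F. finite F \<longrightarrow> F \<subseteq> sn (prod_alg I A) \<longrightarrow>
      (\<forall>e>0. \<exists>y\<in>{x \<in> carr (prod_alg I A). x k \<in> Jk}. \<forall>q\<in>F. q (sub (prod_alg I A) x y) < e)"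
  have "\<exists>y\<in>Jk. \<forall>p\<in>G. p (sub (A k) (x k) y) < e"
    if G: "finite G" "G \<subseteq> sn (A k)" and e: "e > 0" for G e
  proof -
    have "finite ((\<lambda>p f. p (f k)) ` G)" "(\<lambda>p f. p (f k)) ` G \<subseteq> sn (prod_alg I A)"
      using G k by (auto simp: prod_alg_simps)
    from approx[rule_format, OF this e] obtain y where "y \<in> carr (prod_alg I A)" "y k \<in> Jk"
      "\<forall>p\<in>G. p (sub (prod_alg I A) x y k) < e"
      by auto
    then show ?thesis using k by (auto simp: sub_prod_alg)
  qed
  moreover have "x k \<in> carr (A k)" using x k by auto
  ultimately have "x k \<in> Jk" using Jk unfolding sn_closed_def by blast
  then show "x \<in> {x \<in> carr (prod_alg I A). x k \<in> Jk}" using x by blast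
qed auto

text \<open>Coordinates other than \<open>k\<close> are tested with \<open>prod_embed m (x\<^sub>m\<^sup>*)\<close>, which lies in the preimage
  since its \<open>k\<close>-th coordinate is zero.\<close>
lemma ran_proj_vimage:
  assumes proper: "\<forall>i\<in>I. proper_star_algebra (A i)"
    and Jk: "left_ideal (A k) Jk" "ran (A k) Jk = {zer (A k)}" and k: "k \<in> I"
  shows "ran (prod_alg I A) {x \<in> carr (prod_alg I A). x k \<in> Jk} = {zer (prod_alg I A)}"
proof -
  let ?J = "{x \<in> carr (prod_alg I A). x k \<in> Jk}"
  have zJk: "zer (A k) \<in> Jk" and Jk_carr: "Jk \<subseteq> carr (A k)"
    using Jk(1) by (auto simp: left_ideal_def subspace_of_def)
  have "x = zer (prod_alg I A)" if x: "x \<in> ran (prod_alg I A) ?J" for x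
  proof -
    have xc: "x \<in> carr (prod_alg I A)"
      and annih: "\<And>s. s \<in> ?J \<Longrightarrow> mul (prod_alg I A) s x = zer (prod_alg I A)"
      using x by (auto simp: ran_def)
    have embed_annih: "mul (A m) y (x m) = zer (A m)"
      if m: "m \<in> I" and y: "y \<in> carr (A m)" "prod_embed I A m y k \<in> Jk" for m y
    proof -
      have "prod_embed I A m y \<in> ?J" using prod_embed_closed[OF m y(1)] y(2) by blast
      then have "prod_embed I A m (mul (A m) y (x m)) = zer (prod_alg I A)"
        using annih mul_prod_embed_left[OF xc m y(1)] by simp
      then show ?thesis by (rule prod_embed_eq_zer_iff[OF m, THEN iffD1])
    qed
    have "x m = zer (A m)" if m: "m \<in> I" for m
    proof (cases "m = k")
      case True
      have "x k \<in> ran (A k) Jk"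
        using embed_annih[OF k] Jk_carr xc k by (auto simp: ran_def)
      then show ?thesis using Jk(2) True by blast
    next
      case False
      have Am: "star_algebra (A m)" and xm: "x m \<in> carr (A m)" using A m xc by auto
      have "mul (A m) (st (A m) (x m)) (x m) = zer (A m)"
        using embed_annih[OF m st_closed[OF Am xm]] False zJk by (simp add: prod_embed_def k)
      then show ?thesis
        using proper_star_algebra_st_mul_eq_zer[OF proper[rule_format, OF m] xm] by blast
    qed
    then show ?thesis using xc by (auto simp: prod_alg_simps PiE_iff extensional_def)
  qed
  moreover have "zer (prod_alg I A) \<in> ran (prod_alg I A) ?J"
    using zer_closed[OF star_algebra_prod_alg[OF A]] mul_zer_right[OF star_algebra_prod_alg[OF A]]
    by (auto simp: ran_def simp del: carr_prod_alg)
  ultimately show ?thesis by blast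
qed

end

lemma left_annihilator_algebra_component:
  assumes proper: "\<forall>i\<in>I. proper_star_algebra (A i)"
    and P: "left_annihilator_algebra (prod_alg I A)" and k: "k \<in> I"
  shows "left_annihilator_algebra (A k)"
  unfolding left_annihilator_algebra_iff[OF proper[rule_format, OF k]]
proof (intro allI impI)
  have A: "\<forall>i\<in>I. star_algebra (A i)" using proper proper_star_algebra_star_algebra by blast
  fix Jk assume Jk: "left_ideal (A k) Jk" "sn_closed (A k) Jk" "ran (A k) Jk = {zer (A k)}"
  let ?J = "{x \<in> carr (prod_alg I A). x k \<in> Jk}"
  have J: "?J = carr (prod_alg I A)"
    using P[unfolded left_annihilator_algebra_iff[OF proper_star_algebra_prod_alg[OF proper]]]
      left_ideal_proj_vimage[OF A Jk(1) k] sn_closed_proj_vimage[OF A Jk(2) k]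
      ran_proj_vimage[OF A proper Jk(1,3) k]
    by blast
  show "Jk = carr (A k)"
  proof
    show "Jk \<subseteq> carr (A k)" using Jk(1) by (simp add: left_ideal_def subspace_of_def)
    show "carr (A k) \<subseteq> Jk"
    proof
      fix y assume y: "y \<in> carr (A k)"
      then have "prod_embed I A k y \<in> ?J" using prod_embed_closed[OF A k y] J by blast
      then show "y \<in> Jk" using k by simp
    qed
  qed
qed

lemma left_annihilator_algebra_prod_alg_of_components:
  assumes proper: "\<forall>i\<in>I. proper_star_algebra (A i)"
    and zero: "\<forall>i\<in>I. \<forall>p\<in>sn (A i). p (zer (A i)) = 0"
    and H: "\<forall>k\<in>I. left_annihilator_algebra (A k)"
  shows "left_annihilator_algebra (prod_alg I A)"
  unfolding left_annihilator_algebra_iff[OF proper_star_algebra_prod_alg[OF proper]]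
proof (intro allI impI)
  have A: "\<forall>i\<in>I. star_algebra (A i)" using proper proper_star_algebra_star_algebra by blast
  fix J assume J: "left_ideal (prod_alg I A) J" "sn_closed (prod_alg I A) J"
    "ran (prod_alg I A) J = {zer (prod_alg I A)}"
  have "prod_embed I A k y \<in> J" if k: "k \<in> I" and y: "y \<in> carr (A k)" for k y
    using H[rule_format, OF k, unfolded left_annihilator_algebra_iff[OF proper[rule_format, OF k]]]
      left_ideal_prod_embed_slice[OF A J(1) k] sn_closed_prod_embed_slice[OF A zero J(2) k]
      ran_prod_embed_slice[OF A proper J(1,3) k] y
    by blast
  then show "J = carr (prod_alg I A)"
    using subspace_containing_embeds_eq_carr[OF A zero] J(1,2) by (simp add: left_ideal_def)
qed

lemma left_annihilator_algebra_prod_alg: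
  assumes "\<forall>i\<in>I. proper_star_algebra (A i)" and "\<forall>i\<in>I. \<forall>p\<in>sn (A i). p (zer (A i)) = 0"
  shows "left_annihilator_algebra (prod_alg I A) \<longleftrightarrow> (\<forall>k\<in>I. left_annihilator_algebra (A k))"
  using assms left_annihilator_algebra_component left_annihilator_algebra_prod_alg_of_components
  by metis

theorem proposition3p28:
  fixes \<Lambda> :: "'i set" and A :: "'i \<Rightarrow> 'a lcalg"
  assumes "\<forall>\<nu>\<in>\<Lambda>. locally_cstar_algebra (A \<nu>)"
  shows "annihilator_algebra (prod_alg \<Lambda> A) \<longleftrightarrow> (\<forall>\<nu>\<in>\<Lambda>. annihilator_algebra (A \<nu>))"
proof -
  have proper: "\<forall>\<nu>\<in>\<Lambda>. proper_star_algebra (A \<nu>)"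
    using assms locally_cstar_algebra_proper by blast
  have zero: "\<forall>\<nu>\<in>\<Lambda>. \<forall>p\<in>sn (A \<nu>). p (zer (A \<nu>)) = 0"
    using assms locally_cstar_algebra_seminorm_zer by blast
  have proper_opp: "\<forall>\<nu>\<in>\<Lambda>. proper_star_algebra (opposite_alg (A \<nu>))"
    using proper proper_star_algebra_opposite_alg by blast
  have zero_opp: "\<forall>\<nu>\<in>\<Lambda>. \<forall>p\<in>sn (opposite_alg (A \<nu>)). p (zer (opposite_alg (A \<nu>))) = 0"
    using zero by simp
  have "annihilator_algebra (prod_alg \<Lambda> A) \<longleftrightarrow>
      left_annihilator_algebra (prod_alg \<Lambda> A) \<and>
      left_annihilator_algebra (prod_alg \<Lambda> (\<lambda>\<nu>. opposite_alg (A \<nu>)))"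
    by (simp add: annihilator_algebra_iff_left prod_alg_opposite_alg)
  also have "\<dots> \<longleftrightarrow> (\<forall>\<nu>\<in>\<Lambda>. left_annihilator_algebra (A \<nu>)) \<and>
      (\<forall>\<nu>\<in>\<Lambda>. left_annihilator_algebra (opposite_alg (A \<nu>)))"
    using left_annihilator_algebra_prod_alg[OF proper zero]
      left_annihilator_algebra_prod_alg[OF proper_opp zero_opp] by simp
  also have "\<dots> \<longleftrightarrow> (\<forall>\<nu>\<in>\<Lambda>. annihilator_algebra (A \<nu>))"
    by (auto simp: annihilator_algebra_iff_left)
  finally show ?thesis .
qed

end
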